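(* In the setting of the context, suppose that $\rho:=\rho_{\mathcal A_\nu,\mathcal S_{\log},\pi_{\log}}$ is quasi-convex and lower semicontinuous with respect to $\tau_{\log}$. Then for all $X\in\mathcal C$, $$\eta_{\mathfrak R}(X)=\sup_{\varphi\in\mathcal D}\ \inf\big\{\pi(Z):\ Z\in\mathcal S,\ W\in\mathcal B_{\tilde\rho},\ \varphi(W)\ge\varphi(X)-\varphi(Z)\big\},$$ where $\mathcal D$ is the set of all log-linear $\tau$-continuous maps $\varphi\colon\mathcal C\to\mathbb R$ (and $\inf\emptyset=\infty$).
   Context: Probability space $(\Omega,\mathcal F,P)$; $L^0_{++}$ = a.s. strictly positive random variables; $L^\infty_{++}=L^\infty\cap L^0_{++}$; $\frac{\mathcal A}{\mathcal D}=\{AD^{-1}\}$. Setting: nonempty $\mathcal C,\mathcal S,\mathcal K\subset L^0_{++}$ with $\frac{\mathcal C}{\mathcal S}\subset\mathcal K$, $\mathcal K$ a cone, $(\mathcal C,\cdot)$ a group, and (so that all expressions are defined) $\mathcal K\subset\mathcal C$ and $\mathcal S\subset\mathcal C$; pricing map $\pi\colon\mathcal S\to(0,\infty)$. $\mathcal C_{\log},\mathcal S_{\log},\mathcal K_{\log}$ are the images under $\log$. $\mathcal C_{\log}$ is equipped with a topology $\tau_{\log}$ making it a locally convex topological vector space; $\mathcal C$ carries $\tau=\{\exp(U):U\in\tau_{\log}\}$. A map $\varphi\colon\mathcal C\to\mathbb R$ is log-linear if $\varphi(X^\alpha Y^\beta)=\alpha\varphi(X)+\beta\varphi(Y)$ for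 $X,Y\in\mathcal C$, $\alpha,\beta\in\mathbb R$; the log-linear $\tau$-continuous maps are exactly $\psi\circ\log$ with $\psi$ in the topological dual of $\mathcal C_{\log}$. A return risk measure (RRM), with $L^\infty_{++}\subset\mathcal K$, is a positively homogeneous nondecreasing $\tilde\rho\colon\mathcal K\to(0,\infty)$ with $\tilde\rho(1)=1$; $\mathcal B_{\tilde\rho}=\{K\in\mathcal K:\tilde\rho(K)\le1\}$; $\mathfrak R=(\mathcal B_{\tilde\rho},\mathcal S,\pi)$; MARRM $\eta_{\mathfrak R}(X)=\inf\{\pi(Z):Z\in\mathcal S,\ X/Z\in\mathcal B_{\tilde\rho}\}$. Further $\nu=\log\circ\tilde\rho\circ\exp$, $\mathcal A_\nu=\{Y\in\mathcal K_{\log}:\nu(Y)\le0\}$, $\pi_{\log}=\log\circ\pi\circ\exp$ on $\mathcal S_{\log}$, and $\rho_{\mathcal A_\nu,\mathcal S_{\log},\pi_{\log}}(X_{\log})=\inf\{\pi_{\log}(L):L\in\mathcal S_{\log},\ X_{\log}-L\in\mathcal A_\nu\}$ on $\mathcal C_{\log}$. Quasi-convex: $\rho(\alpha Y_1+(1-\alpha)Y_2)\le\max\{\rho(Y_1),\rho(Y_2)\}$. Conventions $\exp(-\infty)=0$, $\exp(\infty)=\infty$. *)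

theory Defs
  imports "HOL-Probability.Probability"
begin

text \<open>Random variables are represented by (measurable) functions; elements of
L0_{++} by everywhere strictly positive representatives.\<close>

definition L0pp :: "'a measure \<Rightarrow> ('a \<Rightarrow> real) set" where
  "L0pp M = {X \<in> borel_measurable M. \<forall>\<omega>. 0 < X \<omega>}"

definition Linfpp :: "'a measure \<Rightarrow> ('a \<Rightarrow> real) set" where
  "Linfpp M = {X \<in> L0pp M. \<exists>c. AE \<omega> in M. X \<omega> \<le> c}"

definition rv_div :: "('a \<Rightarrow> real) \<Rightarrow> ('a \<Rightarrow> real) \<Rightarrow> ('a \<Rightarrow> real)" where
  "rv_div X Z = (\<lambda>\<omega>. X \<omega> / Z \<omega>)"

definition rv_log :: "('a \<Rightarrow> real) \<Rightarrow> ('a \<Rightarrow> real)" where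
  "rv_log X = (\<lambda>\<omega>. ln (X \<omega>))"

definition rv_exp :: "('a \<Rightarrow> real) \<Rightarrow> ('a \<Rightarrow> real)" where
  "rv_exp Y = (\<lambda>\<omega>. exp (Y \<omega>))"

definition logset :: "('a \<Rightarrow> real) set \<Rightarrow> ('a \<Rightarrow> real) set" where
  "logset A = rv_log ` A"

definition is_mult_group :: "('a \<Rightarrow> real) set \<Rightarrow> bool" where
  "is_mult_group C \<longleftrightarrow> (\<lambda>\<omega>. 1) \<in> C \<and> (\<forall>X\<in>C. \<forall>Y\<in>C. (\<lambda>\<omega>. X \<omega> * Y \<omega>) \<in> C)
     \<and> (\<forall>X\<in>C. (\<lambda>\<omega>. 1 / X \<omega>) \<in> C)"

definition is_cone :: "('a \<Rightarrow> real) set \<Rightarrow> bool" where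
  "is_cone K \<longleftrightarrow> (\<forall>X\<in>K. \<forall>c::real. c > 0 \<longrightarrow> (\<lambda>\<omega>. c * X \<omega>) \<in> K)"

definition is_RRM :: "'a measure \<Rightarrow> ('a \<Rightarrow> real) set \<Rightarrow> (('a \<Rightarrow> real) \<Rightarrow> real) \<Rightarrow> bool" where
  "is_RRM M K \<rho> \<longleftrightarrow> Linfpp M \<subseteq> K \<and> (\<forall>X\<in>K. 0 < \<rho> X)
     \<and> (\<forall>X\<in>K. \<forall>c::real. c > 0 \<longrightarrow> \<rho> (\<lambda>\<omega>. c * X \<omega>) = c * \<rho> X)
     \<and> (\<forall>X\<in>K. \<forall>Y\<in>K. (AE \<omega> in M. X \<omega> \<le> Y \<omega>) \<longrightarrow> \<rho> X \<le> \<rho> Y)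
     \<and> \<rho> (\<lambda>\<omega>. 1) = 1"

definition acc_set :: "('a \<Rightarrow> real) set \<Rightarrow> (('a \<Rightarrow> real) \<Rightarrow> real) \<Rightarrow> ('a \<Rightarrow> real) set" where
  "acc_set K \<rho> = {W \<in> K. \<rho> W \<le> 1}"

text \<open>MARRM eta_R(X), with inf of the empty set = infinity.\<close>
definition MARRM :: "('a \<Rightarrow> real) set \<Rightarrow> (('a \<Rightarrow> real) \<Rightarrow> real) \<Rightarrow> ('a \<Rightarrow> real) set
    \<Rightarrow> ('a \<Rightarrow> real) \<Rightarrow> ereal" where
  "MARRM S \<pi> B X = Inf {ereal (\<pi> Z) | Z. Z \<in> S \<and> rv_div X Z \<in> B}"

definition nu :: "(('a \<Rightarrow> real) \<Rightarrow> real) \<Rightarrow> ('a \<Rightarrow> real) \<Rightarrow> real" where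
  "nu \<rho> Y = ln (\<rho> (rv_exp Y))"

definition A_nu :: "('a \<Rightarrow> real) set \<Rightarrow> (('a \<Rightarrow> real) \<Rightarrow> real) \<Rightarrow> ('a \<Rightarrow> real) set" where
  "A_nu K \<rho> = {Y \<in> logset K. nu \<rho> Y \<le> 0}"

definition pi_log :: "(('a \<Rightarrow> real) \<Rightarrow> real) \<Rightarrow> ('a \<Rightarrow> real) \<Rightarrow> real" where
  "pi_log \<pi> L = ln (\<pi> (rv_exp L))"

definition rho_log :: "('a \<Rightarrow> real) set \<Rightarrow> ('a \<Rightarrow> real) set \<Rightarrow> (('a \<Rightarrow> real) \<Rightarrow> real)
    \<Rightarrow> ('a \<Rightarrow> real) \<Rightarrow> ereal" where
  "rho_log A Slog \<pi>l x = Inf {ereal (\<pi>l L) | L. L \<in> Slog \<and> (\<lambda>\<omega>. x \<omega> - L \<omega>) \<in> A}"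

definition convex_fun_set :: "('a \<Rightarrow> real) set \<Rightarrow> bool" where
  "convex_fun_set W \<longleftrightarrow> (\<forall>y\<in>W. \<forall>z\<in>W. \<forall>t::real. 0 \<le> t \<and> t \<le> 1 \<longrightarrow> (\<lambda>\<omega>. t * y \<omega> + (1 - t) * z \<omega>) \<in> W)"

definition lctvs :: "('a \<Rightarrow> real) set \<Rightarrow> ('a \<Rightarrow> real) topology \<Rightarrow> bool" where
  "lctvs V T \<longleftrightarrow> topspace T = V \<and> V \<noteq> {}
     \<and> (\<forall>x\<in>V. \<forall>y\<in>V. \<forall>a b::real. (\<lambda>\<omega>. a * x \<omega> + b * y \<omega>) \<in> V)
     \<and> continuous_map (prod_topology T T) T (\<lambda>(x, y). \<lambda>\<omega>. x \<omega> + y \<omega>)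
     \<and> continuous_map (prod_topology euclideanreal T) T (\<lambda>(a, x). \<lambda>\<omega>. a * x \<omega>)
     \<and> (\<forall>U x. openin T U \<and> x \<in> U \<longrightarrow> (\<exists>W. openin T W \<and> convex_fun_set W \<and> x \<in> W \<and> W \<subseteq> U))"

definition quasi_convex_on :: "('a \<Rightarrow> real) set \<Rightarrow> (('a \<Rightarrow> real) \<Rightarrow> ereal) \<Rightarrow> bool" where
  "quasi_convex_on V f \<longleftrightarrow> (\<forall>x\<in>V. \<forall>y\<in>V. \<forall>t::real. 0 \<le> t \<and> t \<le> 1 \<longrightarrow>
       f (\<lambda>\<omega>. t * x \<omega> + (1 - t) * y \<omega>) \<le> max (f x) (f y))"

definition lsc_on :: "'b topology \<Rightarrow> ('b \<Rightarrow> ereal) \<Rightarrow> bool" where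
  "lsc_on T f \<longleftrightarrow> (\<forall>c::ereal. closedin T {x \<in> topspace T. f x \<le> c})"

definition log_linear :: "('a \<Rightarrow> real) set \<Rightarrow> (('a \<Rightarrow> real) \<Rightarrow> real) \<Rightarrow> bool" where
  "log_linear C \<phi> \<longleftrightarrow> (\<forall>X\<in>C. \<forall>Y\<in>C. \<forall>a b::real.
       \<phi> (\<lambda>\<omega>. X \<omega> powr a * Y \<omega> powr b) = a * \<phi> X + b * \<phi> Y)"

text \<open>tau = {exp(U) : U open in tau_log}, i.e. the pullback of tau_log along log.\<close>
definition tau_of :: "('a \<Rightarrow> real) set \<Rightarrow> ('a \<Rightarrow> real) topology \<Rightarrow> ('a \<Rightarrow> real) topology" where
  "tau_of C Tlog = pullback_topology C rv_log Tlog"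

definition dual_set :: "('a \<Rightarrow> real) set \<Rightarrow> ('a \<Rightarrow> real) topology \<Rightarrow> (('a \<Rightarrow> real) \<Rightarrow> real) set" where
  "dual_set C Tlog = {\<phi>. log_linear C \<phi> \<and> continuous_map (tau_of C Tlog) euclideanreal \<phi>}"

end

theory Submission
  imports Defs
begin

text \<open>
  Taking logarithms turns the MARRM into the risk measure \<rho> = \<rho>_{A_\<nu>, S_log, \<pi>_log} on the
  locally convex space C_log: \<rho>(log X) < c forces \<eta>(X) < exp c, and \<rho>(log W + log Z) \<le> log \<pi>(Z)
  whenever W is acceptable.  The inequality \<ge> is elementary, since every log-linear \<phi> satisfies
  \<phi>(X / Z) = \<phi>(X) - \<phi>(Z).  For \<le>, let 0 < r < \<eta>(X).  Then log X lies outside the sublevel set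
  {\<rho> \<le> log r}, which is closed by lower semicontinuity and convex by quasi-convexity, so a continuous
  linear functional \<psi> strictly separates them.  For \<phi> = \<psi> \<circ> log, every admissible pair (Z, W)
  has \<psi>(log W + log Z) \<ge> \<psi>(log X), hence log W + log Z lies outside the sublevel set and
  \<pi>(Z) > r.  The separating functional is obtained from the Hahn--Banach theorem applied to the
  Minkowski gauge of an open convex neighbourhood of 0.
\<close>

section \<open>Sublinear functionals and the Hahn--Banach theorem\<close>

definition lincomb_closed :: "('a \<Rightarrow> real) set \<Rightarrow> bool" where
  "lincomb_closed V \<longleftrightarrow> (\<forall>x\<in>V. \<forall>y\<in>V. \<forall>a b::real. (\<lambda>\<omega>. a * x \<omega> + b * y \<omega>) \<in> V)"

definition sublinear_on :: "('a \<Rightarrow> real) set \<Rightarrow> (('a \<Rightarrow> real) \<Rightarrow> real) \<Rightarrow> bool" where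
  "sublinear_on V q \<longleftrightarrow> (\<forall>x\<in>V. \<forall>y\<in>V. q (\<lambda>\<omega>. x \<omega> + y \<omega>) \<le> q x + q y)
     \<and> (\<forall>x\<in>V. \<forall>t::real. t > 0 \<longrightarrow> q (\<lambda>\<omega>. t * x \<omega>) = t * q x)"

definition linear_on :: "('a \<Rightarrow> real) set \<Rightarrow> (('a \<Rightarrow> real) \<Rightarrow> real) \<Rightarrow> bool" where
  "linear_on V g \<longleftrightarrow> (\<forall>x\<in>V. \<forall>y\<in>V. \<forall>a b::real. g (\<lambda>\<omega>. a * x \<omega> + b * y \<omega>) = a * g x + b * g y)"

lemma lincomb_closedD: "lincomb_closed V \<Longrightarrow> x \<in> V \<Longrightarrow> y \<in> V \<Longrightarrow> (\<lambda>\<omega>. a * x \<omega> + b * y \<omega>) \<in> V"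
  unfolding lincomb_closed_def by blast

lemma lincomb_closed_add: "lincomb_closed V \<Longrightarrow> x \<in> V \<Longrightarrow> y \<in> V \<Longrightarrow> (\<lambda>\<omega>. x \<omega> + y \<omega>) \<in> V"
  using lincomb_closedD[of V x y 1 1] by simp

lemma lincomb_closed_scale: "lincomb_closed V \<Longrightarrow> x \<in> V \<Longrightarrow> (\<lambda>\<omega>. a * x \<omega>) \<in> V"
  using lincomb_closedD[of V x x a 0] by simp

lemma lincomb_closed_neg: "lincomb_closed V \<Longrightarrow> x \<in> V \<Longrightarrow> (\<lambda>\<omega>. - x \<omega>) \<in> V"
  using lincomb_closed_scale[of V x "-1"] by simp

lemma lincomb_closed_diff: "lincomb_closed V \<Longrightarrow> x \<in> V \<Longrightarrow> y \<in> V \<Longrightarrow> (\<lambda>\<omega>. x \<omega> - y \<omega>) \<in> V"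
  using lincomb_closedD[of V x y 1 "-1"] by simp

lemma lincomb_closed_zero: "lincomb_closed V \<Longrightarrow> x \<in> V \<Longrightarrow> (\<lambda>\<omega>. 0) \<in> V"
  using lincomb_closed_scale[of V x 0] by simp

lemma sublinear_on_add: "sublinear_on V q \<Longrightarrow> x \<in> V \<Longrightarrow> y \<in> V \<Longrightarrow> q (\<lambda>\<omega>. x \<omega> + y \<omega>) \<le> q x + q y"
  unfolding sublinear_on_def by blast

lemma sublinear_on_scale: "sublinear_on V q \<Longrightarrow> x \<in> V \<Longrightarrow> t > 0 \<Longrightarrow> q (\<lambda>\<omega>. t * x \<omega>) = t * q x"
  unfolding sublinear_on_def by blast

lemma sublinear_on_zero:
  assumes "sublinear_on V q" "(\<lambda>\<omega>. 0) \<in> V"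
  shows "q (\<lambda>\<omega>. 0) = 0"
  using sublinear_on_scale[OF assms, of 2] by simp

lemma sublinear_on_neg_le:
  assumes V: "lincomb_closed V" and q: "sublinear_on V q" and x: "x \<in> V"
  shows "- q (\<lambda>\<omega>. - x \<omega>) \<le> q x"
  using sublinear_on_add[OF q x lincomb_closed_neg[OF V x]]
    sublinear_on_zero[OF q lincomb_closed_zero[OF V x]] by simp

lemma linear_onD:
  "linear_on V g \<Longrightarrow> x \<in> V \<Longrightarrow> y \<in> V \<Longrightarrow> g (\<lambda>\<omega>. a * x \<omega> + b * y \<omega>) = a * g x + b * g y"
  unfolding linear_on_def by blast

lemma linear_on_add_scale:
  assumes "linear_on V g" "x \<in> V" "y \<in> V"
  shows "g (\<lambda>\<omega>. x \<omega> + c * y \<omega>) = g x + c * g y"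
  using linear_onD[OF assms, of 1 c] by simp

lemma linear_on_diff:
  assumes "linear_on V g" "x \<in> V" "y \<in> V"
  shows "g (\<lambda>\<omega>. x \<omega> - y \<omega>) = g x - g y"
  using linear_on_add_scale[OF assms, of "-1"] by simp

lemma le_mult_cInf:
  fixes S :: "real set"
  assumes "S \<noteq> {}" "s > 0" "\<And>e. e \<in> S \<Longrightarrow> a \<le> s * e"
  shows "a \<le> s * Inf S"
proof -
  have "a / s \<le> Inf S"
    using assms by (intro cInf_greatest) (auto simp: divide_le_eq mult.commute)
  then show ?thesis using assms(2) by (simp add: divide_le_eq mult.commute)
qed

lemma sublinear_onI:
  assumes V: "lincomb_closed V"
    and add: "\<And>x y. x \<in> V \<Longrightarrow> y \<in> V \<Longrightarrow> q (\<lambda>\<omega>. x \<omega> + y \<omega>) \<le> q x + q y"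
    and scale: "\<And>x t. x \<in> V \<Longrightarrow> t > 0 \<Longrightarrow> q (\<lambda>\<omega>. t * x \<omega>) \<le> t * q x"
  shows "sublinear_on V q"
  unfolding sublinear_on_def
proof (intro conjI ballI allI impI add antisym)
  fix x and t :: real assume x: "x \<in> V" and t: "t > 0"
  show "q (\<lambda>\<omega>. t * x \<omega>) \<le> t * q x" using scale[OF x t] .
  have "q x = q (\<lambda>\<omega>. (1 / t) * (t * x \<omega>))" using t by simp
  also have "\<dots> \<le> (1 / t) * q (\<lambda>\<omega>. t * x \<omega>)"
    using scale[OF lincomb_closed_scale[OF V x, where a=t], of "1 / t"] t by simp
  finally show "t * q x \<le> q (\<lambda>\<omega>. t * x \<omega>)" using t by (simp add: field_simps)
qed

lemma sublinear_on_lower_in_direction: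
  assumes V: "lincomb_closed V" and q: "sublinear_on V q" and z: "z \<in> V" and c: "c \<le> q z"
  defines "r \<equiv> \<lambda>x. INF t\<in>{0..}. q (\<lambda>\<omega>. x \<omega> + t * z \<omega>) - t * c"
  shows "sublinear_on V r" and "\<And>x. x \<in> V \<Longrightarrow> r x \<le> q x" and "r (\<lambda>\<omega>. - z \<omega>) \<le> - c"
proof -
  have mem: "(\<lambda>\<omega>. x \<omega> + t * z \<omega>) \<in> V" if "x \<in> V" for x t
    using lincomb_closedD[OF V that z, of 1 t] by simp
  have "- q (\<lambda>\<omega>. - x \<omega>) \<le> q (\<lambda>\<omega>. x \<omega> + t * z \<omega>) - t * c" if x: "x \<in> V" and t: "t \<ge> 0" for x t
  proof -
    have "q (\<lambda>\<omega>. (x \<omega> + t * z \<omega>) + - x \<omega>) \<le> q (\<lambda>\<omega>. x \<omega> + t * z \<omega>) + q (\<lambda>\<omega>. - x \<omega>)"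
      using sublinear_on_add[OF q mem[OF x] lincomb_closed_neg[OF V x]] .
    moreover have "q (\<lambda>\<omega>. (x \<omega> + t * z \<omega>) + - x \<omega>) = t * q z"
      using t sublinear_on_scale[OF q z, of t] sublinear_on_zero[OF q lincomb_closed_zero[OF V z]]
      by (cases "t = 0") auto
    moreover have "t * c \<le> t * q z" using c t by (simp add: mult_left_mono)
    ultimately show ?thesis by linarith
  qed
  then have bdd: "bdd_below ((\<lambda>t. q (\<lambda>\<omega>. x \<omega> + t * z \<omega>) - t * c) ` {0..})" if "x \<in> V" for x
    using that by (intro bdd_belowI2) auto
  have low: "r x \<le> q (\<lambda>\<omega>. x \<omega> + t * z \<omega>) - t * c" if "x \<in> V" "t \<ge> 0" for x t
    unfolding r_def using cINF_lower[OF bdd] that by simp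
  have great: "y \<le> r x" if "\<And>t. t \<ge> 0 \<Longrightarrow> y \<le> q (\<lambda>\<omega>. x \<omega> + t * z \<omega>) - t * c" for x y
    unfolding r_def using that by (intro cINF_greatest) auto
  show "r x \<le> q x" if "x \<in> V" for x
    using low[OF that, of 0] by simp
  show "r (\<lambda>\<omega>. - z \<omega>) \<le> - c"
    using low[OF lincomb_closed_neg[OF V z], of 1] sublinear_on_zero[OF q lincomb_closed_zero[OF V z]]
    by simp
  show "sublinear_on V r"
  proof (rule sublinear_onI[OF V])
    fix x y assume x: "x \<in> V" and y: "y \<in> V"
    have sum: "r (\<lambda>\<omega>. x \<omega> + y \<omega>) \<le> (q (\<lambda>\<omega>. x \<omega> + t1 * z \<omega>) - t1 * c) + (q (\<lambda>\<omega>. y \<omega> + t2 * z \<omega>) - t2 * c)"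
      if "t1 \<ge> 0" "t2 \<ge> 0" for t1 t2
    proof -
      have "r (\<lambda>\<omega>. x \<omega> + y \<omega>) \<le> q (\<lambda>\<omega>. (x \<omega> + t1 * z \<omega>) + (y \<omega> + t2 * z \<omega>)) - (t1 + t2) * c"
        using low[OF lincomb_closed_add[OF V x y], of "t1 + t2"] that by (simp add: algebra_simps)
      also have "\<dots> \<le> q (\<lambda>\<omega>. x \<omega> + t1 * z \<omega>) + q (\<lambda>\<omega>. y \<omega> + t2 * z \<omega>) - (t1 + t2) * c"
        using sublinear_on_add[OF q mem[OF x] mem[OF y]] by simp
      finally show ?thesis by (simp add: algebra_simps)
    qed
    have "r (\<lambda>\<omega>. x \<omega> + y \<omega>) - (q (\<lambda>\<omega>. y \<omega> + t2 * z \<omega>) - t2 * c) \<le> r x" if "t2 \<ge> 0" for t2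
      using sum[OF _ that] by (intro great) (simp add: algebra_simps)
    then have "r (\<lambda>\<omega>. x \<omega> + y \<omega>) - r x \<le> r y"
      by (intro great) (simp add: algebra_simps)
    then show "r (\<lambda>\<omega>. x \<omega> + y \<omega>) \<le> r x + r y" by simp
  next
    fix x and s :: real assume x: "x \<in> V" and s: "s > 0"
    have "r (\<lambda>\<omega>. s * x \<omega>) \<le> s * (INF t\<in>{0..}. q (\<lambda>\<omega>. x \<omega> + t * z \<omega>) - t * c)"
    proof (rule le_mult_cInf[OF _ s])
      fix e assume "e \<in> (\<lambda>t. q (\<lambda>\<omega>. x \<omega> + t * z \<omega>) - t * c) ` {0..}"
      then obtain t where t: "t \<ge> 0" and e: "e = q (\<lambda>\<omega>. x \<omega> + t * z \<omega>) - t * c" by auto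
      have "r (\<lambda>\<omega>. s * x \<omega>) \<le> q (\<lambda>\<omega>. s * (x \<omega> + t * z \<omega>)) - (s * t) * c"
        using low[OF lincomb_closed_scale[OF V x], of "s * t"] s t by (simp add: algebra_simps)
      also have "\<dots> = s * (q (\<lambda>\<omega>. x \<omega> + t * z \<omega>) - t * c)"
        using sublinear_on_scale[OF q mem[OF x] s] by (simp add: right_diff_distrib)
      finally show "r (\<lambda>\<omega>. s * x \<omega>) \<le> s * e" unfolding e .
    qed auto
    then show "r (\<lambda>\<omega>. s * x \<omega>) \<le> s * r x" unfolding r_def .
  qed
qed

lemma linear_on_if_odd:
  assumes V: "lincomb_closed V" and q: "sublinear_on V q"
    and odd: "\<And>z. z \<in> V \<Longrightarrow> q (\<lambda>\<omega>. - z \<omega>) = - q z"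
  shows "linear_on V q"
proof -
  have scale: "q (\<lambda>\<omega>. a * x \<omega>) = a * q x" if x: "x \<in> V" for x a
  proof (cases a "0::real" rule: linorder_cases)
    case less
    have "q (\<lambda>\<omega>. a * x \<omega>) = q (\<lambda>\<omega>. (- a) * (- x \<omega>))" by simp
    also have "\<dots> = (- a) * q (\<lambda>\<omega>. - x \<omega>)"
      using less by (intro sublinear_on_scale[OF q lincomb_closed_neg[OF V x]]) simp
    finally show ?thesis using odd[OF x] by simp
  next
    case equal
    then show ?thesis using sublinear_on_zero[OF q lincomb_closed_zero[OF V x]] by simp
  qed (use sublinear_on_scale[OF q x] in simp)
  show ?thesis unfolding linear_on_def
  proof (intro ballI allI antisym)
    fix x y a b assume x: "x \<in> V" and y: "y \<in> V"
    have le: "q (\<lambda>\<omega>. a * x \<omega> + b * y \<omega>) \<le> a * q x + b * q y" for a b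
      using sublinear_on_add[OF q lincomb_closed_scale[OF V x] lincomb_closed_scale[OF V y]]
      by (simp add: scale x y)
    show "q (\<lambda>\<omega>. a * x \<omega> + b * y \<omega>) \<le> a * q x + b * q y" by (rule le)
    have "q (\<lambda>\<omega>. - (a * x \<omega> + b * y \<omega>)) \<le> - a * q x - b * q y"
      using le[of "- a" "- b"] by simp
    then show "a * q x + b * q y \<le> q (\<lambda>\<omega>. a * x \<omega> + b * y \<omega>)"
      using odd[OF lincomb_closedD[OF V x y, of a b]] by simp
  qed
qed

lemma linear_on_if_minimal_sublinear:
  assumes V: "lincomb_closed V" and q: "sublinear_on V q"
    and minimal: "\<And>q'. sublinear_on V q' \<Longrightarrow> \<forall>x\<in>V. q' x \<le> q x \<Longrightarrow> \<forall>x\<in>V. q' x = q x"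
  shows "linear_on V q"
proof (rule linear_on_if_odd[OF V q])
  fix z assume z: "z \<in> V"
  note lower = sublinear_on_lower_in_direction[OF V q z order_refl]
  have "q (\<lambda>\<omega>. - z \<omega>) \<le> - q z"
    using minimal[OF lower(1)] lower(2,3) lincomb_closed_neg[OF V z] by force
  moreover have "- q z \<le> q (\<lambda>\<omega>. - z \<omega>)"
    using sublinear_on_neg_le[OF V q lincomb_closed_neg[OF V z]] by simp
  ultimately show "q (\<lambda>\<omega>. - z \<omega>) = - q z" by simp
qed

lemma sublinear_on_INF_chain:
  assumes V: "lincomb_closed V" and "Q \<noteq> {}" and sub: "\<And>q. q \<in> Q \<Longrightarrow> sublinear_on V q"
    and bdd: "\<And>q x. q \<in> Q \<Longrightarrow> x \<in> V \<Longrightarrow> h x \<le> q x"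
    and chain: "\<And>q1 q2. q1 \<in> Q \<Longrightarrow> q2 \<in> Q \<Longrightarrow> (\<forall>x\<in>V. q1 x \<le> q2 x) \<or> (\<forall>x\<in>V. q2 x \<le> q1 x)"
  shows "sublinear_on V (\<lambda>x. INF q\<in>Q. q x)"
proof -
  define r where "r = (\<lambda>x. INF q\<in>Q. q x)"
  have low: "r x \<le> q x" if "x \<in> V" "q \<in> Q" for x q
    unfolding r_def using bdd that by (intro cINF_lower bdd_belowI2) auto
  have great: "y \<le> r x" if "\<And>q. q \<in> Q \<Longrightarrow> y \<le> q x" for x y
    unfolding r_def using \<open>Q \<noteq> {}\<close> that by (intro cINF_greatest) auto
  have "sublinear_on V r"
  proof (rule sublinear_onI[OF V])
    fix x y assume x: "x \<in> V" and y: "y \<in> V"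
    have "r (\<lambda>\<omega>. x \<omega> + y \<omega>) \<le> q1 x + q2 y" if q1: "q1 \<in> Q" and q2: "q2 \<in> Q" for q1 q2
    proof -
      obtain q where "q \<in> Q" "q x \<le> q1 x" "q y \<le> q2 y"
        using chain[OF q1 q2] q1 q2 x y by (metis order_refl)
      then show ?thesis
        using low[OF lincomb_closed_add[OF V x y]] sublinear_on_add[OF sub x y] by force
    qed
    then have "r (\<lambda>\<omega>. x \<omega> + y \<omega>) - q2 y \<le> r x" if "q2 \<in> Q" for q2
      using that by (intro great) (simp add: algebra_simps)
    then have "r (\<lambda>\<omega>. x \<omega> + y \<omega>) - r x \<le> r y"
      by (intro great) (simp add: algebra_simps)
    then show "r (\<lambda>\<omega>. x \<omega> + y \<omega>) \<le> r x + r y" by simp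
  next
    fix x and s :: real assume x: "x \<in> V" and s: "s > 0"
    have "r (\<lambda>\<omega>. s * x \<omega>) \<le> s * (INF q\<in>Q. q x)"
      using low[OF lincomb_closed_scale[OF V x]] sublinear_on_scale[OF sub x s] \<open>Q \<noteq> {}\<close>
      by (intro le_mult_cInf[OF _ s]) auto
    then show "r (\<lambda>\<omega>. s * x \<omega>) \<le> s * r x" unfolding r_def .
  qed
  then show ?thesis unfolding r_def .
qed

lemma sublinear_on_below_ge:
  assumes V: "lincomb_closed V" and q: "sublinear_on V q" and le: "\<forall>x\<in>V. q x \<le> p x" and x: "x \<in> V"
  shows "- p (\<lambda>\<omega>. - x \<omega>) \<le> q x"
  using sublinear_on_neg_le[OF V q x] le lincomb_closed_neg[OF V x] by force

lemma ex_minimal_sublinear_below: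
  assumes V: "lincomb_closed V" and p: "sublinear_on V p"
  obtains q where "sublinear_on V q" "\<forall>x\<in>V. q x \<le> p x"
    and "\<And>q'. sublinear_on V q' \<Longrightarrow> \<forall>x\<in>V. q' x \<le> q x \<Longrightarrow> \<forall>x\<in>V. q' x = q x"
proof -
  \<comment> \<open>Zorn's lemma for inclusion of epigraphs; the bound of a chain is its pointwise infimum\<close>
  define epi where "epi = (\<lambda>q. {(x, t::real). x \<in> V \<and> q x \<le> t})"
  define F where "F = {q. sublinear_on V q \<and> (\<forall>x\<in>V. q x \<le> p x)}"
  have epi_subset_iff: "epi q1 \<subseteq> epi q2 \<longleftrightarrow> (\<forall>x\<in>V. q2 x \<le> q1 x)" for q1 q2
    unfolding epi_def by (auto dest: order_trans)
  have "\<exists>U\<in>epi ` F. \<forall>X\<in>C. X \<subseteq> U" if C: "C \<in> chains (epi ` F)" and "C \<noteq> {}" for C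
  proof -
    define Q where "Q = {q \<in> F. epi q \<in> C}"
    have "C \<subseteq> epi ` F" using C unfolding chains_def by auto
    then have "Q \<noteq> {}" and C_eq: "C = epi ` Q" using \<open>C \<noteq> {}\<close> unfolding Q_def by auto
    have sub: "sublinear_on V q" and le: "\<forall>x\<in>V. q x \<le> p x" if "q \<in> Q" for q
      using that unfolding Q_def F_def by auto
    have lower: "- p (\<lambda>\<omega>. - x \<omega>) \<le> q x" if "q \<in> Q" "x \<in> V" for q x
      by (rule sublinear_on_below_ge[OF V sub[OF that(1)] le[OF that(1)] that(2)])
    have bdd: "bdd_below ((\<lambda>q. q x) ` Q)" if "x \<in> V" for x
      using lower that by (intro bdd_belowI2)
    have "sublinear_on V (\<lambda>x. INF q\<in>Q. q x)"
    proof (rule sublinear_on_INF_chain[OF V \<open>Q \<noteq> {}\<close>])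
      show "sublinear_on V q" if "q \<in> Q" for q using sub[OF that] .
      show "- p (\<lambda>\<omega>. - x \<omega>) \<le> q x" if "q \<in> Q" "x \<in> V" for q x using lower[OF that] .
      show "(\<forall>x\<in>V. q1 x \<le> q2 x) \<or> (\<forall>x\<in>V. q2 x \<le> q1 x)" if "q1 \<in> Q" "q2 \<in> Q" for q1 q2
        using chainsD[OF C, of "epi q1" "epi q2"] that epi_subset_iff unfolding Q_def by blast
    qed
    moreover have "(INF q\<in>Q. q x) \<le> p x" if "x \<in> V" for x
    proof -
      obtain q where "q \<in> Q" using \<open>Q \<noteq> {}\<close> by blast
      then show ?thesis using le that by (intro cINF_lower2[OF bdd[OF that]]) auto
    qed
    ultimately have "(\<lambda>x. INF q\<in>Q. q x) \<in> F" unfolding F_def by blast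
    moreover have "epi q \<subseteq> epi (\<lambda>x. INF q\<in>Q. q x)" if "q \<in> Q" for q
      unfolding epi_subset_iff using that bdd by (auto intro: cINF_lower)
    ultimately show ?thesis unfolding C_eq by blast
  qed
  moreover have "p \<in> F" using p unfolding F_def by auto
  ultimately have "\<forall>C\<in>chains (epi ` F). \<exists>U\<in>epi ` F. \<forall>X\<in>C. X \<subseteq> U" by blast
  from Zorn_Lemma2[OF this] obtain q where q: "q \<in> F"
    and max: "\<And>q'. q' \<in> F \<Longrightarrow> epi q \<subseteq> epi q' \<Longrightarrow> epi q' = epi q"
    by (auto simp: Bex_def)
  show ?thesis
  proof (rule that)
    show "sublinear_on V q" "\<forall>x\<in>V. q x \<le> p x" using q unfolding F_def by auto
    fix q' assume "sublinear_on V q'" and le: "\<forall>x\<in>V. q' x \<le> q x"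
    then have "q' \<in> F" using q unfolding F_def by force
    then have "epi q' = epi q" using max le epi_subset_iff by blast
    then show "\<forall>x\<in>V. q' x = q x" using le epi_subset_iff[of q' q] by (auto intro: antisym)
  qed
qed

theorem Hahn_Banach_sublinear:
  assumes V: "lincomb_closed V" and p: "sublinear_on V p"
  shows "\<exists>g. linear_on V g \<and> (\<forall>x\<in>V. g x \<le> p x)"
proof -
  obtain q where "sublinear_on V q" "\<forall>x\<in>V. q x \<le> p x"
    and "\<And>q'. sublinear_on V q' \<Longrightarrow> \<forall>x\<in>V. q' x \<le> q x \<Longrightarrow> \<forall>x\<in>V. q' x = q x"
    using ex_minimal_sublinear_below[OF V p] by blast
  then show ?thesis using linear_on_if_minimal_sublinear[OF V] by blast
qed

corollary Hahn_Banach_sublinear_at: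
  assumes V: "lincomb_closed V" and p: "sublinear_on V p" and z: "z \<in> V"
  shows "\<exists>g. linear_on V g \<and> (\<forall>x\<in>V. g x \<le> p x) \<and> g z = p z"
proof -
  note lower = sublinear_on_lower_in_direction[OF V p z order_refl]
  obtain g where g: "linear_on V g" and le: "\<forall>x\<in>V. g x \<le> (INF t\<in>{0..}. p (\<lambda>\<omega>. x \<omega> + t * z \<omega>) - t * p z)"
    using Hahn_Banach_sublinear[OF V lower(1)] by blast
  have "- g z = g (\<lambda>\<omega>. - z \<omega>)" using linear_onD[OF g z z, of "-1" 0] by simp
  also have "\<dots> \<le> - p z" using le lower(3) lincomb_closed_neg[OF V z] by force
  finally have "p z \<le> g z" by simp
  moreover have "\<forall>x\<in>V. g x \<le> p x" using le lower(2) by force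
  ultimately show ?thesis using g z by force
qed

section \<open>Separation in locally convex spaces of random variables\<close>

lemma lctvs_topspace: "lctvs V T \<Longrightarrow> topspace T = V"
  unfolding lctvs_def by blast

lemma lctvs_lincomb_closed: "lctvs V T \<Longrightarrow> lincomb_closed V"
  unfolding lctvs_def lincomb_closed_def by blast

lemma lctvs_convex_nhood:
  assumes "lctvs V T" "openin T U" "x \<in> U"
  obtains W where "openin T W" "convex_fun_set W" "x \<in> W" "W \<subseteq> U"
  using assms unfolding lctvs_def by metis

lemma continuous_map_lctvs_affine:
  assumes L: "lctvs V T" and u: "u \<in> V"
  shows "continuous_map T T (\<lambda>v. \<lambda>\<omega>. c * (v \<omega> - u \<omega>))"
proof -
  have add: "continuous_map (prod_topology T T) T (\<lambda>(x, y). \<lambda>\<omega>. x \<omega> + y \<omega>)"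
    and mul: "continuous_map (prod_topology euclideanreal T) T (\<lambda>(a, x). \<lambda>\<omega>. a * x \<omega>)"
    using L unfolding lctvs_def by blast+
  have "(\<lambda>\<omega>. - u \<omega>) \<in> topspace T"
    using lincomb_closed_neg[OF lctvs_lincomb_closed[OF L] u] lctvs_topspace[OF L] by simp
  then have "continuous_map T T (\<lambda>v. \<lambda>\<omega>. v \<omega> + - u \<omega>)"
    using continuous_map_compose[OF _ add, of T "\<lambda>v. (v, \<lambda>\<omega>. - u \<omega>)"]
    by (simp add: continuous_map_pairedI o_def)
  then have "continuous_map T T (\<lambda>v. \<lambda>\<omega>. c * (v \<omega> + - u \<omega>))"
    using continuous_map_compose[OF _ mul, of T "\<lambda>v. (c, \<lambda>\<omega>. v \<omega> + - u \<omega>)"]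
    by (simp add: continuous_map_pairedI o_def)
  then show ?thesis by simp
qed

lemma lctvs_open_ray:
  assumes L: "lctvs V T" and v: "v \<in> V" and G: "openin T G" and s0: "(\<lambda>\<omega>. s0 * v \<omega>) \<in> G"
  shows "\<exists>e>0. \<forall>s. \<bar>s - s0\<bar> < e \<longrightarrow> (\<lambda>\<omega>. s * v \<omega>) \<in> G"
proof -
  have mul: "continuous_map (prod_topology euclideanreal T) T (\<lambda>(a, x). \<lambda>\<omega>. a * x \<omega>)"
    using L unfolding lctvs_def by blast
  have "continuous_map euclideanreal T (\<lambda>s. \<lambda>\<omega>. s * v \<omega>)"
    using continuous_map_compose[OF _ mul, of euclideanreal "\<lambda>s. (s, v)"] v lctvs_topspace[OF L]
    by (simp add: continuous_map_pairedI o_def)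
  then have "open {s. (\<lambda>\<omega>. s * v \<omega>) \<in> G}"
    using openin_continuous_map_preimage[OF _ G] by fastforce
  then show ?thesis
    using s0 unfolding open_dist by (auto simp: dist_real_def)
qed

lemma convex_fun_setD:
  "convex_fun_set W \<Longrightarrow> y \<in> W \<Longrightarrow> z \<in> W \<Longrightarrow> 0 \<le> t \<Longrightarrow> t \<le> 1 \<Longrightarrow> (\<lambda>\<omega>. t * y \<omega> + (1 - t) * z \<omega>) \<in> W"
  unfolding convex_fun_set_def by blast

definition minkowski_gauge :: "('a \<Rightarrow> real) set \<Rightarrow> ('a \<Rightarrow> real) \<Rightarrow> real" where
  "minkowski_gauge G v = Inf {t. 0 < t \<and> (\<lambda>\<omega>. v \<omega> / t) \<in> G}"

lemma minkowski_gauge_le: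
  assumes "0 < t" "(\<lambda>\<omega>. v \<omega> / t) \<in> G"
  shows "minkowski_gauge G v \<le> t"
  unfolding minkowski_gauge_def using assms by (intro cInf_lower) (auto intro: bdd_belowI[of _ 0])

lemma minkowski_gauge_absorbing:
  assumes L: "lctvs V T" and G: "openin T G" "(\<lambda>\<omega>. 0) \<in> G" and v: "v \<in> V"
  shows "\<exists>t>0. (\<lambda>\<omega>. v \<omega> / t) \<in> G"
proof -
  obtain e where "e > 0" and e: "\<forall>s. \<bar>s\<bar> < e \<longrightarrow> (\<lambda>\<omega>. s * v \<omega>) \<in> G"
    using lctvs_open_ray[OF L v G(1), of 0] G(2) by auto
  then have "(\<lambda>\<omega>. v \<omega> / (2 / e)) \<in> G" using e[rule_format, of "e / 2"] by (simp add: mult.commute)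
  then show ?thesis using \<open>e > 0\<close> by (intro exI[of _ "2 / e"]) simp
qed

lemma minkowski_gauge_greatest:
  assumes "\<exists>t>0. (\<lambda>\<omega>. v \<omega> / t) \<in> G" and "\<And>t. 0 < t \<Longrightarrow> (\<lambda>\<omega>. v \<omega> / t) \<in> G \<Longrightarrow> y \<le> t"
  shows "y \<le> minkowski_gauge G v"
  unfolding minkowski_gauge_def using assms by (intro cInf_greatest) auto

lemma minkowski_gauge_less_one:
  assumes L: "lctvs V T" and G: "openin T G" and v: "v \<in> G"
  shows "minkowski_gauge G v < 1"
proof -
  have "v \<in> V" using openin_subset[OF G] v lctvs_topspace[OF L] by auto
  then obtain e where "e > 0" and e: "\<forall>s. \<bar>s - 1\<bar> < e \<longrightarrow> (\<lambda>\<omega>. s * v \<omega>) \<in> G"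
    using lctvs_open_ray[OF L _ G, of v 1] v by auto
  then have "(\<lambda>\<omega>. v \<omega> / (1 / (1 + e / 2))) \<in> G" using e[rule_format, of "1 + e / 2"] by (simp add: mult.commute)
  then have "minkowski_gauge G v \<le> 1 / (1 + e / 2)"
    using \<open>e > 0\<close> by (intro minkowski_gauge_le) auto
  also have "\<dots> < 1" using \<open>e > 0\<close> by simp
  finally show ?thesis .
qed

lemma one_le_minkowski_gauge:
  assumes G: "convex_fun_set G" "(\<lambda>\<omega>. 0) \<in> G" and d: "d \<notin> G" and absorb: "\<exists>t>0. (\<lambda>\<omega>. d \<omega> / t) \<in> G"
  shows "1 \<le> minkowski_gauge G d"
proof (rule minkowski_gauge_greatest[OF absorb], rule ccontr)
  fix t :: real assume t: "0 < t" "(\<lambda>\<omega>. d \<omega> / t) \<in> G" "\<not> 1 \<le> t"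
  have "(\<lambda>\<omega>. t * (d \<omega> / t) + (1 - t) * 0) \<in> G"
    using convex_fun_setD[OF G(1) t(2) G(2), of t] t by simp
  then show False using d t by simp
qed

lemma sublinear_minkowski_gauge:
  assumes L: "lctvs V T" and G: "openin T G" "convex_fun_set G" "(\<lambda>\<omega>. 0) \<in> G"
  shows "sublinear_on V (minkowski_gauge G)"
proof (rule sublinear_onI[OF lctvs_lincomb_closed[OF L]])
  note absorb = minkowski_gauge_absorbing[OF L G(1,3)]
  fix x y assume x: "x \<in> V" and y: "y \<in> V"
  have sum: "minkowski_gauge G (\<lambda>\<omega>. x \<omega> + y \<omega>) \<le> t1 + t2"
    if t1: "0 < t1" "(\<lambda>\<omega>. x \<omega> / t1) \<in> G" and t2: "0 < t2" "(\<lambda>\<omega>. y \<omega> / t2) \<in> G" for t1 t2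
  proof (rule minkowski_gauge_le)
    have "(\<lambda>\<omega>. (t1 / (t1 + t2)) * (x \<omega> / t1) + (1 - t1 / (t1 + t2)) * (y \<omega> / t2)) \<in> G"
      using t1 t2 by (intro convex_fun_setD[OF G(2)]) auto
    moreover have "(t1 / (t1 + t2)) * (x \<omega> / t1) + (1 - t1 / (t1 + t2)) * (y \<omega> / t2) = (x \<omega> + y \<omega>) / (t1 + t2)" for \<omega>
    proof -
      have "t1 + t2 \<noteq> 0" "t1 \<noteq> 0" "t2 \<noteq> 0" using t1 t2 by auto
      moreover from this have "1 - t1 / (t1 + t2) = t2 / (t1 + t2)" by (simp add: field_simps)
      ultimately show ?thesis by (simp add: add_divide_distrib)
    qed
    ultimately show "(\<lambda>\<omega>. (x \<omega> + y \<omega>) / (t1 + t2)) \<in> G" by simp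
  qed (use t1 t2 in simp)
  have "minkowski_gauge G (\<lambda>\<omega>. x \<omega> + y \<omega>) - t2 \<le> minkowski_gauge G x"
    if "0 < t2" "(\<lambda>\<omega>. y \<omega> / t2) \<in> G" for t2
    using sum[OF _ _ that] by (intro minkowski_gauge_greatest[OF absorb[OF x]]) (simp add: algebra_simps)
  then have "minkowski_gauge G (\<lambda>\<omega>. x \<omega> + y \<omega>) - minkowski_gauge G x \<le> minkowski_gauge G y"
    by (intro minkowski_gauge_greatest[OF absorb[OF y]]) (simp add: algebra_simps)
  then show "minkowski_gauge G (\<lambda>\<omega>. x \<omega> + y \<omega>) \<le> minkowski_gauge G x + minkowski_gauge G y" by simp
next
  fix x and s :: real assume x: "x \<in> V" and s: "0 < s"
  have "minkowski_gauge G (\<lambda>\<omega>. s * x \<omega>) \<le> s * t" if "0 < t" "(\<lambda>\<omega>. x \<omega> / t) \<in> G" for t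
    using that s by (intro minkowski_gauge_le) auto
  then show "minkowski_gauge G (\<lambda>\<omega>. s * x \<omega>) \<le> s * minkowski_gauge G x"
    unfolding minkowski_gauge_def[of G x]
    using minkowski_gauge_absorbing[OF L G(1,3) x] s by (intro le_mult_cInf) auto
qed

lemma openin_linear_functional_less:
  assumes L: "lctvs V T" and g: "linear_on V g"
    and G: "openin T G" "(\<lambda>\<omega>. 0) \<in> G" and bound: "\<forall>v\<in>G. g v < 1"
  shows "openin T {x \<in> topspace T. g x < \<alpha>}"
proof (subst openin_subopen, intro ballI)
  have GV: "G \<subseteq> V" using openin_subset[OF G(1)] lctvs_topspace[OF L] by simp
  fix u assume "u \<in> {x \<in> topspace T. g x < \<alpha>}"
  then have u: "u \<in> V" "g u < \<alpha>" using lctvs_topspace[OF L] by auto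
  define \<delta> where "\<delta> = \<alpha> - g u"
  have "\<delta> > 0" using u unfolding \<delta>_def by simp
  \<comment> \<open>the neighbourhood u + \<delta> G\<close>
  define N where "N = {v \<in> topspace T. (\<lambda>\<omega>. (1 / \<delta>) * (v \<omega> - u \<omega>)) \<in> G}"
  have "openin T N"
    unfolding N_def by (rule openin_continuous_map_preimage[OF continuous_map_lctvs_affine[OF L u(1)] G(1)])
  moreover have "u \<in> N" unfolding N_def using u G(2) lctvs_topspace[OF L] by simp
  moreover have "N \<subseteq> {x \<in> topspace T. g x < \<alpha>}"
  proof
    fix v assume "v \<in> N"
    define h where "h = (\<lambda>\<omega>. (1 / \<delta>) * (v \<omega> - u \<omega>))"
    have h: "h \<in> G" and v: "v \<in> topspace T" using \<open>v \<in> N\<close> unfolding N_def h_def by auto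
    have "v = (\<lambda>\<omega>. u \<omega> + \<delta> * h \<omega>)" using \<open>\<delta> > 0\<close> unfolding h_def by (auto simp: fun_eq_iff)
    then have "g v = g u + \<delta> * g h" using linear_on_add_scale[OF g u(1)] h GV by auto
    also have "\<dots> < g u + \<delta>" using mult_strict_left_mono[OF bound[rule_format, OF h] \<open>\<delta> > 0\<close>] by simp
    finally show "v \<in> {x \<in> topspace T. g x < \<alpha>}" using v unfolding \<delta>_def by simp
  qed
  ultimately show "\<exists>N. openin T N \<and> u \<in> N \<and> N \<subseteq> {x \<in> topspace T. g x < \<alpha>}" by blast
qed

lemma continuous_map_linear_functional:
  assumes L: "lctvs V T" and g: "linear_on V g"
    and G: "openin T G" "(\<lambda>\<omega>. 0) \<in> G" and bound: "\<forall>v\<in>G. g v < 1"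
  shows "continuous_map T euclideanreal g"
  unfolding continuous_map_upper_lower_semicontinuous_lt
proof (intro allI conjI)
  fix \<alpha> :: real
  show "openin T {x \<in> topspace T. g x < \<alpha>}"
    by (rule openin_linear_functional_less[OF L g G bound])
  \<comment> \<open>the lower sets of g are upper sets of - g, which is bounded by 1 on - G\<close>
  define G' where "G' = {v \<in> topspace T. (\<lambda>\<omega>. -1 * (v \<omega> - 0)) \<in> G}"
  have "linear_on V (\<lambda>x. - g x)"
    using g unfolding linear_on_def by (simp add: algebra_simps)
  moreover have "openin T G'"
    unfolding G'_def using lincomb_closed_zero[OF lctvs_lincomb_closed[OF L]] G openin_subset[OF G(1)]
    by (intro openin_continuous_map_preimage[OF continuous_map_lctvs_affine[OF L] G(1)])
      (auto simp: lctvs_topspace[OF L])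
  moreover have "(\<lambda>\<omega>. 0) \<in> G'" using G(2) openin_subset[OF G(1)] unfolding G'_def by auto
  moreover have "\<forall>v\<in>G'. - g v < 1"
    using bound linear_onD[OF g, of _ _ "-1" 0] lctvs_topspace[OF L] unfolding G'_def by force
  ultimately have "openin T {x \<in> topspace T. - g x < - \<alpha>}"
    by (rule openin_linear_functional_less[OF L])
  then show "openin T {x \<in> topspace T. \<alpha> < g x}" by simp
qed

lemma openin_lctvs_reflect:
  assumes L: "lctvs V T" and u: "u \<in> V" and W: "openin T W"
  shows "openin T {v \<in> topspace T. (\<lambda>\<omega>. u \<omega> - v \<omega>) \<in> W}"
proof -
  have "(\<lambda>\<omega>. -1 * (v \<omega> - u \<omega>)) = (\<lambda>\<omega>. u \<omega> - v \<omega>)" for v by (simp add: fun_eq_iff)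
  then show ?thesis using openin_continuous_map_preimage[OF continuous_map_lctvs_affine[OF L u, of "-1"] W] by simp
qed

lemma separation_open_convex:
  assumes L: "lctvs V T" and G: "openin T G" "convex_fun_set G" "(\<lambda>\<omega>. 0) \<in> G"
    and d: "d \<in> V" "d \<notin> G"
  shows "\<exists>g. linear_on V g \<and> continuous_map T euclideanreal g \<and> (\<forall>v\<in>G. g v < 1) \<and> 1 \<le> g d"
proof -
  obtain g where g: "linear_on V g" "\<forall>x\<in>V. g x \<le> minkowski_gauge G x" "g d = minkowski_gauge G d"
    using Hahn_Banach_sublinear_at[OF lctvs_lincomb_closed[OF L] sublinear_minkowski_gauge[OF L G] d(1)]
    by blast
  have "\<forall>v\<in>G. g v < 1"
    using g(2) minkowski_gauge_less_one[OF L G(1)] openin_subset[OF G(1)] lctvs_topspace[OF L]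
    by force
  moreover have "1 \<le> g d"
    using one_le_minkowski_gauge[OF G(2,3) d(2) minkowski_gauge_absorbing[OF L G(1,3) d(1)]] g(3)
    by simp
  ultimately show ?thesis
    using g(1) continuous_map_linear_functional[OF L g(1) G(1,3)] by blast
qed

theorem separation_closed_convex:
  assumes L: "lctvs V T" and A: "closedin T A" "convex_fun_set A" and x0: "x0 \<in> V" "x0 \<notin> A"
  shows "\<exists>\<psi>. linear_on V \<psi> \<and> continuous_map T euclideanreal \<psi> \<and> (\<forall>a\<in>A. \<psi> a < \<psi> x0)"
proof (cases "A = {}")
  case True
  have "linear_on V (\<lambda>_. 0)" unfolding linear_on_def by simp
  then show ?thesis using True by (intro exI[of _ "\<lambda>_. 0"]) auto
next
  case False
  then obtain a0 where a0: "a0 \<in> A" by blast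
  have V: "lincomb_closed V" and top: "topspace T = V"
    using lctvs_lincomb_closed[OF L] lctvs_topspace[OF L] .
  have AV: "A \<subseteq> V" using closedin_subset[OF A(1)] top by simp
  then have a0V: "a0 \<in> V" using a0 by blast
  have "openin T (V - A)" using A(1) top unfolding closedin_def by simp
  moreover have "x0 \<in> V - A" using x0 by blast
  ultimately obtain W where W: "openin T W" "convex_fun_set W" "x0 \<in> W" "W \<subseteq> V - A"
    by (rule lctvs_convex_nhood[OF L])
  \<comment> \<open>G = x0 - a0 + A - W is an open convex neighbourhood of 0 not containing x0 - a0\<close>
  define G where "G = (\<Union>a\<in>A. {v \<in> topspace T. (\<lambda>\<omega>. x0 \<omega> - a0 \<omega> + a \<omega> - v \<omega>) \<in> W})"
  have G_iff: "v \<in> G \<longleftrightarrow> v \<in> V \<and> (\<exists>a\<in>A. (\<lambda>\<omega>. x0 \<omega> - a0 \<omega> + a \<omega> - v \<omega>) \<in> W)" for v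
    unfolding G_def top by blast
  have "openin T G"
    unfolding G_def
  proof (intro openin_Union ballI, clarsimp)
    fix a assume "a \<in> A"
    then have "(\<lambda>\<omega>. x0 \<omega> - a0 \<omega> + a \<omega>) \<in> V"
      using AV lincomb_closed_add[OF V lincomb_closed_diff[OF V x0(1) a0V]] by blast
    then show "openin T {v \<in> topspace T. (\<lambda>\<omega>. x0 \<omega> - a0 \<omega> + a \<omega> - v \<omega>) \<in> W}"
      using openin_lctvs_reflect[OF L _ W(1)] by fastforce
  qed
  moreover have "convex_fun_set G"
    unfolding convex_fun_set_def
  proof (intro ballI allI impI)
    fix y z and t :: real assume y: "y \<in> G" and z: "z \<in> G" and t: "0 \<le> t \<and> t \<le> 1"
    obtain a1 where y1: "y \<in> V" "a1 \<in> A" "(\<lambda>\<omega>. x0 \<omega> - a0 \<omega> + a1 \<omega> - y \<omega>) \<in> W"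
      using y G_iff by blast
    obtain a2 where z1: "z \<in> V" "a2 \<in> A" "(\<lambda>\<omega>. x0 \<omega> - a0 \<omega> + a2 \<omega> - z \<omega>) \<in> W"
      using z G_iff by blast
    have "(\<lambda>\<omega>. t * a1 \<omega> + (1 - t) * a2 \<omega>) \<in> A" using convex_fun_setD[OF A(2) y1(2) z1(2)] t by blast
    moreover have "(\<lambda>\<omega>. t * (x0 \<omega> - a0 \<omega> + a1 \<omega> - y \<omega>) + (1 - t) * (x0 \<omega> - a0 \<omega> + a2 \<omega> - z \<omega>)) \<in> W"
      using convex_fun_setD[OF W(2) y1(3) z1(3)] t by blast
    moreover have "(\<lambda>\<omega>. t * (x0 \<omega> - a0 \<omega> + a1 \<omega> - y \<omega>) + (1 - t) * (x0 \<omega> - a0 \<omega> + a2 \<omega> - z \<omega>))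
       = (\<lambda>\<omega>. x0 \<omega> - a0 \<omega> + (t * a1 \<omega> + (1 - t) * a2 \<omega>) - (t * y \<omega> + (1 - t) * z \<omega>))"
      by (simp add: fun_eq_iff algebra_simps)
    ultimately show "(\<lambda>\<omega>. t * y \<omega> + (1 - t) * z \<omega>) \<in> G"
      unfolding G_iff using lincomb_closedD[OF V y1(1) z1(1)] by auto
  qed
  moreover have "(\<lambda>\<omega>. 0) \<in> G"
    unfolding G_iff using lincomb_closed_zero[OF V x0(1)] a0 W(3) by (intro conjI bexI[of _ a0]) auto
  moreover have "(\<lambda>\<omega>. x0 \<omega> - a0 \<omega>) \<notin> G"
    using W(4) unfolding G_iff by auto
  ultimately obtain g where g: "linear_on V g" "continuous_map T euclideanreal g"
      "\<forall>v\<in>G. g v < 1" "1 \<le> g (\<lambda>\<omega>. x0 \<omega> - a0 \<omega>)"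
    using separation_open_convex[OF L] lincomb_closed_diff[OF V x0(1) a0V] by blast
  have "g a < g x0" if a: "a \<in> A" for a
  proof -
    have aV: "a \<in> V" using a AV by blast
    have "(\<lambda>\<omega>. a \<omega> - a0 \<omega>) \<in> G"
      unfolding G_iff using lincomb_closed_diff[OF V aV a0V] a W(3) by (intro conjI bexI[of _ a]) auto
    then have "g a - g a0 < g x0 - g a0"
      using g(3,4) linear_on_diff[OF g(1) aV a0V] linear_on_diff[OF g(1) x0(1) a0V] by fastforce
    then show ?thesis by simp
  qed
  then show ?thesis using g(1,2) by blast
qed

section \<open>Dual representation of the MARRM\<close>

lemma L0pp_pos: "X \<in> L0pp M \<Longrightarrow> 0 < X \<omega>"
  unfolding L0pp_def by blast

lemma rv_exp_rv_log: "(\<And>\<omega>. 0 < X \<omega>) \<Longrightarrow> rv_exp (rv_log X) = X"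
  unfolding rv_exp_def rv_log_def by simp

lemma rv_log_mult:
  assumes "\<And>\<omega>. 0 < X \<omega>" "\<And>\<omega>. 0 < Y \<omega>"
  shows "rv_log (\<lambda>\<omega>. X \<omega> * Y \<omega>) = (\<lambda>\<omega>. rv_log X \<omega> + rv_log Y \<omega>)"
proof -
  have "ln (X \<omega> * Y \<omega>) = ln (X \<omega>) + ln (Y \<omega>)" for \<omega>
    using assms[of \<omega>] by (simp add: ln_mult)
  then show ?thesis unfolding rv_log_def by simp
qed

lemma rv_log_rv_div:
  assumes "\<And>\<omega>. 0 < X \<omega>" "\<And>\<omega>. 0 < Y \<omega>"
  shows "rv_log (rv_div X Y) = (\<lambda>\<omega>. rv_log X \<omega> - rv_log Y \<omega>)"
proof -
  have "ln (X \<omega> / Y \<omega>) = ln (X \<omega>) - ln (Y \<omega>)" for \<omega>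
    using assms[of \<omega>] by (simp add: ln_div)
  then show ?thesis unfolding rv_log_def rv_div_def by simp
qed

lemma rv_log_powr_mult:
  assumes "\<And>\<omega>. 0 < X \<omega>" "\<And>\<omega>. 0 < Y \<omega>"
  shows "rv_log (\<lambda>\<omega>. X \<omega> powr a * Y \<omega> powr b) = (\<lambda>\<omega>. a * rv_log X \<omega> + b * rv_log Y \<omega>)"
proof -
  have "ln (X \<omega> powr a * Y \<omega> powr b) = a * ln (X \<omega>) + b * ln (Y \<omega>)" for \<omega>
    using assms[of \<omega>] by (simp add: ln_mult ln_powr)
  then show ?thesis unfolding rv_log_def by simp
qed

lemma log_linear_rv_div:
  assumes "log_linear C \<phi>" "X \<in> C" "Y \<in> C" "\<And>\<omega>. 0 < X \<omega>" "\<And>\<omega>. 0 < Y \<omega>"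
  shows "\<phi> (rv_div X Y) = \<phi> X - \<phi> Y"
proof -
  have "\<phi> (\<lambda>\<omega>. X \<omega> powr 1 * Y \<omega> powr (-1)) = 1 * \<phi> X + (-1) * \<phi> Y"
    using assms(1-3) unfolding log_linear_def by blast
  moreover have "(\<lambda>\<omega>. X \<omega> powr 1 * Y \<omega> powr (-1)) = rv_div X Y"
    using assms(4,5) by (simp add: rv_div_def fun_eq_iff powr_neg_one less_imp_le)
  ultimately show ?thesis by simp
qed

lemma rv_log_in_A_nu_iff:
  assumes "W \<in> K" "\<And>\<omega>. 0 < W \<omega>" "0 < \<rho>t W"
  shows "rv_log W \<in> A_nu K \<rho>t \<longleftrightarrow> W \<in> acc_set K \<rho>t"
  using assms by (auto simp: A_nu_def acc_set_def nu_def logset_def rv_exp_rv_log)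

lemma convex_sublevel_quasi_convex:
  assumes "quasi_convex_on V f" "lincomb_closed V"
  shows "convex_fun_set {y \<in> V. f y \<le> c}"
  unfolding convex_fun_set_def
proof (intro ballI allI impI)
  fix y z and t :: real assume y: "y \<in> {y \<in> V. f y \<le> c}" and z: "z \<in> {y \<in> V. f y \<le> c}" and t: "0 \<le> t \<and> t \<le> 1"
  have "f (\<lambda>\<omega>. t * y \<omega> + (1 - t) * z \<omega>) \<le> max (f y) (f z)"
    using assms(1) y z t unfolding quasi_convex_on_def by blast
  also have "\<dots> \<le> c" using y z by simp
  finally show "(\<lambda>\<omega>. t * y \<omega> + (1 - t) * z \<omega>) \<in> {y \<in> V. f y \<le> c}"
    using y z lincomb_closedD[OF assms(2)] by auto
qed

locale marrm_setting =
  fixes M :: "'a measure" and C S K :: "('a \<Rightarrow> real) set"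
    and \<pi> \<rho>t :: "('a \<Rightarrow> real) \<Rightarrow> real" and Tlog :: "('a \<Rightarrow> real) topology"
  assumes C_L0pp: "C \<subseteq> L0pp M" and S_sub: "S \<subseteq> C" and K_sub: "K \<subseteq> C"
    and div_in_K: "\<forall>Y\<in>C. \<forall>Z\<in>S. rv_div Y Z \<in> K"
    and mult_group: "is_mult_group C"
    and price_pos: "\<forall>Z\<in>S. 0 < \<pi> Z"
    and lctvs: "lctvs (logset C) Tlog"
    and RRM: "is_RRM M K \<rho>t"
begin

abbreviation "\<rho> \<equiv> rho_log (A_nu K \<rho>t) (logset S) (pi_log \<pi>)"

abbreviation "dual_price \<phi> X \<equiv>
  Inf {ereal (\<pi> Z) | Z W. Z \<in> S \<and> W \<in> acc_set K \<rho>t \<and> \<phi> W \<ge> \<phi> X - \<phi> Z}"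

lemma C_pos: "Y \<in> C \<Longrightarrow> 0 < Y \<omega>"
  by (rule L0pp_pos[OF subsetD[OF C_L0pp]])

lemma RRM_pos: "W \<in> K \<Longrightarrow> 0 < \<rho>t W"
  using RRM unfolding is_RRM_def by (elim conjE) simp

lemma rv_log_in_logset: "Y \<in> C \<Longrightarrow> rv_log Y \<in> logset C"
  unfolding logset_def by blast

lemma dual_price_nonneg: "0 \<le> dual_price \<phi> X"
  using price_pos by (intro Inf_greatest) auto

lemma dual_price_le_MARRM:
  assumes \<phi>: "\<phi> \<in> dual_set C Tlog" and X: "X \<in> C"
  shows "dual_price \<phi> X \<le> MARRM S \<pi> (acc_set K \<rho>t) X"
  unfolding MARRM_def
proof (rule Inf_greatest, clarify)
  fix Z assume Z: "Z \<in> S" "rv_div X Z \<in> acc_set K \<rho>t"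
  have "\<phi> (rv_div X Z) = \<phi> X - \<phi> Z"
    using \<phi> X Z(1) S_sub C_pos unfolding dual_set_def by (intro log_linear_rv_div[of C]) auto
  then have "ereal (\<pi> Z) \<in> {ereal (\<pi> Z) | Z W. Z \<in> S \<and> W \<in> acc_set K \<rho>t \<and> \<phi> W \<ge> \<phi> X - \<phi> Z}"
    using Z by (intro CollectI exI conjI) auto
  then show "dual_price \<phi> X \<le> ereal (\<pi> Z)" by (rule Inf_lower)
qed

lemma MARRM_less_if_rho_less:
  assumes X: "X \<in> C" and less: "\<rho> (rv_log X) < ereal c"
  shows "MARRM S \<pi> (acc_set K \<rho>t) X < ereal (exp c)"
proof -
  obtain e where "e \<in> {ereal (pi_log \<pi> L) | L. L \<in> logset S \<and> (\<lambda>\<omega>. rv_log X \<omega> - L \<omega>) \<in> A_nu K \<rho>t}"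
    and "e < ereal c"
    using less unfolding rho_log_def Inf_less_iff by blast
  then obtain L where L: "L \<in> logset S" "(\<lambda>\<omega>. rv_log X \<omega> - L \<omega>) \<in> A_nu K \<rho>t" "pi_log \<pi> L < c"
    by auto
  then obtain Z where Z: "Z \<in> S" "L = rv_log Z" unfolding logset_def by blast
  have ZC: "Z \<in> C" using Z(1) S_sub by blast
  have div: "rv_div X Z \<in> K" using div_in_K X Z(1) by blast
  have "rv_log (rv_div X Z) = (\<lambda>\<omega>. rv_log X \<omega> - rv_log Z \<omega>)"
    by (rule rv_log_rv_div) (use C_pos X ZC in auto)
  then have "rv_log (rv_div X Z) \<in> A_nu K \<rho>t" using L(2) Z(2) by simp
  moreover have div_pos: "0 < rv_div X Z \<omega>" for \<omega> using C_pos X ZC by (simp add: rv_div_def)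
  ultimately have "rv_div X Z \<in> acc_set K \<rho>t"
    using rv_log_in_A_nu_iff[of "rv_div X Z" K \<rho>t, OF div div_pos RRM_pos[OF div]] by simp
  then have "MARRM S \<pi> (acc_set K \<rho>t) X \<le> ereal (\<pi> Z)"
    unfolding MARRM_def using Z(1) by (intro Inf_lower) blast
  also have "\<pi> Z < exp c"
  proof -
    have "ln (\<pi> Z) < c"
      using L(3) Z(2) rv_exp_rv_log[of Z] C_pos[OF ZC] unfolding pi_log_def by simp
    then have "exp (ln (\<pi> Z)) < exp c" by simp
    then show ?thesis using price_pos Z(1) by simp
  qed
  finally show ?thesis by simp
qed

lemma rho_le_ln_price:
  assumes W: "W \<in> acc_set K \<rho>t" and Z: "Z \<in> S"
  shows "\<rho> (\<lambda>\<omega>. rv_log W \<omega> + rv_log Z \<omega>) \<le> ereal (ln (\<pi> Z))"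
proof -
  have WK: "W \<in> K" using W unfolding acc_set_def by blast
  have "rv_exp (rv_log Z) = Z" using Z S_sub by (intro rv_exp_rv_log C_pos) auto
  then have price: "pi_log \<pi> (rv_log Z) = ln (\<pi> Z)" unfolding pi_log_def by simp
  have "rv_log W \<in> A_nu K \<rho>t"
    using rv_log_in_A_nu_iff[of W K \<rho>t, OF WK C_pos[OF subsetD[OF K_sub WK]] RRM_pos[OF WK]] W by simp
  moreover have "rv_log Z \<in> logset S" using Z unfolding logset_def by blast
  moreover have "(\<lambda>\<omega>. (rv_log W \<omega> + rv_log Z \<omega>) - rv_log Z \<omega>) = rv_log W" by simp
  ultimately have "\<rho> (\<lambda>\<omega>. rv_log W \<omega> + rv_log Z \<omega>) \<le> ereal (pi_log \<pi> (rv_log Z))"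
    unfolding rho_log_def by (intro Inf_lower CollectI exI[of _ "rv_log Z"]) simp
  then show ?thesis unfolding price .
qed

lemma dual_set_rv_log_comp:
  assumes "linear_on (logset C) \<psi>" "continuous_map Tlog euclideanreal \<psi>"
  shows "\<psi> \<circ> rv_log \<in> dual_set C Tlog"
  unfolding dual_set_def
proof (intro CollectI conjI)
  show "continuous_map (tau_of C Tlog) euclideanreal (\<psi> \<circ> rv_log)"
    unfolding tau_of_def by (rule continuous_map_pullback[OF assms(2)])
  show "log_linear C (\<psi> \<circ> rv_log)"
    unfolding log_linear_def
  proof (intro ballI allI)
    fix X Y a b assume X: "X \<in> C" and Y: "Y \<in> C"
    have "rv_log (\<lambda>\<omega>. X \<omega> powr a * Y \<omega> powr b) = (\<lambda>\<omega>. a * rv_log X \<omega> + b * rv_log Y \<omega>)"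
      by (rule rv_log_powr_mult) (use C_pos X Y in auto)
    then show "(\<psi> \<circ> rv_log) (\<lambda>\<omega>. X \<omega> powr a * Y \<omega> powr b) = a * (\<psi> \<circ> rv_log) X + b * (\<psi> \<circ> rv_log) Y"
      using linear_onD[OF assms(1) rv_log_in_logset[OF X] rv_log_in_logset[OF Y]] by simp
  qed
qed
lemma zero_in_dual_set: "(\<lambda>_. 0) \<in> dual_set C Tlog"
  unfolding dual_set_def log_linear_def by simp

lemma dual_price_ge_if_less_MARRM:
  assumes qc: "quasi_convex_on (logset C) \<rho>" and lsc: "lsc_on Tlog \<rho>"
    and X: "X \<in> C" and r: "0 < r" "ereal r < MARRM S \<pi> (acc_set K \<rho>t) X"
  shows "\<exists>\<phi>\<in>dual_set C Tlog. ereal r \<le> dual_price \<phi> X"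
proof -
  have top: "topspace Tlog = logset C" using lctvs_topspace[OF lctvs] .
  define A where "A = {y \<in> topspace Tlog. \<rho> y \<le> ereal (ln r)}"
  have closed: "closedin Tlog A" using lsc unfolding lsc_on_def A_def by (elim allE)
  have convex: "convex_fun_set A"
    unfolding A_def top by (rule convex_sublevel_quasi_convex[OF qc lctvs_lincomb_closed[OF lctvs]])
  have notin: "rv_log X \<notin> A"
  proof
    assume "rv_log X \<in> A"
    obtain r' where r': "ereal r < ereal r'" "ereal r' < MARRM S \<pi> (acc_set K \<rho>t) X"
      using ereal_dense2[OF r(2)] by blast
    have "\<rho> (rv_log X) \<le> ereal (ln r)" using \<open>rv_log X \<in> A\<close> unfolding A_def by blast
    also have "ereal (ln r) < ereal (ln r')" using r(1) r'(1) by simp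
    finally have "MARRM S \<pi> (acc_set K \<rho>t) X < ereal (exp (ln r'))"
      by (rule MARRM_less_if_rho_less[OF X])
    then show False using r(1) r' by simp
  qed
  obtain \<psi> where \<psi>: "linear_on (logset C) \<psi>" "continuous_map Tlog euclideanreal \<psi>"
    "\<forall>a\<in>A. \<psi> a < \<psi> (rv_log X)"
    using separation_closed_convex[OF lctvs closed convex rv_log_in_logset[OF X] notin] by blast
  have "ereal r \<le> dual_price (\<psi> \<circ> rv_log) X"
  proof (rule Inf_greatest, clarify)
    fix Z W assume Z: "Z \<in> S" and W: "W \<in> acc_set K \<rho>t"
      and \<phi>: "(\<psi> \<circ> rv_log) X - (\<psi> \<circ> rv_log) Z \<le> (\<psi> \<circ> rv_log) W"
    have ZC: "Z \<in> C" and WC: "W \<in> C" using Z W S_sub K_sub unfolding acc_set_def by auto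
    define y where "y = (\<lambda>\<omega>. rv_log W \<omega> + rv_log Z \<omega>)"
    have "y = rv_log (\<lambda>\<omega>. W \<omega> * Z \<omega>)"
      unfolding y_def by (rule rv_log_mult[symmetric]) (use C_pos WC ZC in auto)
    moreover have "(\<lambda>\<omega>. W \<omega> * Z \<omega>) \<in> C" using mult_group WC ZC unfolding is_mult_group_def by blast
    ultimately have y: "y \<in> topspace Tlog" using rv_log_in_logset top by simp
    have "\<psi> (rv_log X) \<le> \<psi> y"
      using \<phi> linear_on_add_scale[OF \<psi>(1) rv_log_in_logset[OF WC] rv_log_in_logset[OF ZC], of 1]
      unfolding y_def by simp
    then have "y \<notin> A" using \<psi>(3) by (auto dest: bspec)
    then have "ereal (ln r) < \<rho> y" using y unfolding A_def by simp
    also have "\<dots> \<le> ereal (ln (\<pi> Z))" unfolding y_def by (rule rho_le_ln_price[OF W Z])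
    finally have "ln r < ln (\<pi> Z)" by simp
    then show "ereal r \<le> ereal (\<pi> Z)" using r(1) price_pos Z by simp
  qed
  then show ?thesis using dual_set_rv_log_comp[OF \<psi>(1,2)] by blast
qed

lemma MARRM_le_SUP_dual_price:
  assumes "quasi_convex_on (logset C) \<rho>" "lsc_on Tlog \<rho>" and X: "X \<in> C"
  shows "MARRM S \<pi> (acc_set K \<rho>t) X \<le> (SUP \<phi>\<in>dual_set C Tlog. dual_price \<phi> X)"
proof (rule dense_le)
  fix y assume y: "y < MARRM S \<pi> (acc_set K \<rho>t) X"
  show "y \<le> (SUP \<phi>\<in>dual_set C Tlog. dual_price \<phi> X)"
  proof (cases "y \<le> 0")
    case True
    have "0 \<le> dual_price (\<lambda>_. 0::real) X" by (rule dual_price_nonneg)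
    also have "\<dots> \<le> (SUP \<phi>\<in>dual_set C Tlog. dual_price \<phi> X)" by (rule SUP_upper[OF zero_in_dual_set])
    finally show ?thesis using True by simp
  next
    case False
    then obtain r where r: "y = ereal r" "0 < r" using y by (cases y) auto
    then obtain \<phi> where \<phi>: "\<phi> \<in> dual_set C Tlog" "ereal r \<le> dual_price \<phi> X"
      using dual_price_ge_if_less_MARRM[OF assms r(2)] y by auto
    note \<phi>(2)
    also have "dual_price \<phi> X \<le> (SUP \<phi>\<in>dual_set C Tlog. dual_price \<phi> X)" by (rule SUP_upper[OF \<phi>(1)])
    finally show ?thesis using r(1) by simp
  qed
qed

end

theorem mainTheorem15:
  fixes M :: "'a measure" and C S K :: "('a \<Rightarrow> real) set"
    and \<pi> \<rho>t :: "('a \<Rightarrow> real) \<Rightarrow> real" and Tlog :: "('a \<Rightarrow> real) topology"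
    and X :: "'a \<Rightarrow> real"
  assumes "prob_space M"
    and "C \<noteq> {}" and "S \<noteq> {}" and "K \<noteq> {}"
    and "C \<subseteq> L0pp M" and "S \<subseteq> L0pp M" and "K \<subseteq> L0pp M"
    and "\<forall>Y\<in>C. \<forall>Z\<in>S. rv_div Y Z \<in> K"
    and "is_cone K" and "is_mult_group C"
    and "K \<subseteq> C" and "S \<subseteq> C"
    and "\<forall>Z\<in>S. 0 < \<pi> Z"
    and "lctvs (logset C) Tlog"
    and "is_RRM M K \<rho>t"
    and "quasi_convex_on (logset C) (rho_log (A_nu K \<rho>t) (logset S) (pi_log \<pi>))"
    and "lsc_on Tlog (rho_log (A_nu K \<rho>t) (logset S) (pi_log \<pi>))"
    and "X \<in> C"
  shows "MARRM S \<pi> (acc_set K \<rho>t) X =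
    (SUP \<phi>\<in>dual_set C Tlog.
       Inf {ereal (\<pi> Z) | Z W. Z \<in> S \<and> W \<in> acc_set K \<rho>t \<and> \<phi> W \<ge> \<phi> X - \<phi> Z})"
proof -
  interpret marrm_setting M C S K \<pi> \<rho>t Tlog
    by unfold_locales (fact assms)+
  show ?thesis
  proof (rule antisym)
    show "MARRM S \<pi> (acc_set K \<rho>t) X \<le> (SUP \<phi>\<in>dual_set C Tlog. dual_price \<phi> X)"
      by (rule MARRM_le_SUP_dual_price) (fact assms)+
    show "(SUP \<phi>\<in>dual_set C Tlog. dual_price \<phi> X) \<le> MARRM S \<pi> (acc_set K \<rho>t) X"
    proof (rule SUP_least)
      show "dual_price \<phi> X \<le> MARRM S \<pi> (acc_set K \<rho>t) X" if "\<phi> \<in> dual_set C Tlog" for \<phi>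
        using that assms(18) by (rule dual_price_le_MARRM)
    qed
  qed
qed

end
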